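(* Let $k\ge 2$ and $n>k$ be integers, and let $1\le h\le k$. Let $T$ be an affine equivariant location estimator on $\mathbf{R}^k$ (for data sets of size $n$) satisfying Condition $(C_h)$. Let $X=\{x_1,\dots,x_n\}\subset\mathbf{R}^k$ be a data set in general position. Then $$\mathrm{fsbv}(T,X)\le \frac{\lfloor (n-h+1)/2\rfloor}{n}.$$
   Context: A data set $X=\{x_1,\dots,x_n\}\subset\mathbf{R}^k$ is in general position if no more than $k$ of its points lie on any affine hyperplane of $\mathbf{R}^k$. A location estimator $T$ assigns to every data set of $n$ points (possibly with repetitions) in $\mathbf{R}^k$ a point $T(X)\in\mathbf{R}^k$. It is affine equivariant if $T(\{Ax_1+b,\dots,Ax_n+b\})=AT(\{x_1,\dots,x_n\})+b$ for every nonsingular $k\times k$ matrix $A$ and every $b\in\mathbf{R}^k$. Finite-sample (replacement) breakdown value: for $1\le m\le n$, let $\mathcal{X}_m$ be the collection of all data sets $X'$ obtained from $X$ by replacing some $m$ of the points of $X$ by $m$ arbitrary points of $\mathbf{R}^k$. Then $\mathrm{fsbv}(T,X)=\min\{m/n : \sup_{X'\in\mathcal{X}_m}\|T(X')-T(X)\|=\infty\}$, i.e. the smallest fraction of replaced points that can make $T$ take values arbitrarily far away. Condition $(C_h)$ (for a fixed integer $h$ with $1\le h\le k$): for every data set $X=\{x_1,\dots,x_n\}\subset\mathbf{R}^k$ in general position and every direction $u\in\mathbf{R}^k$ such that the inner products $y_i=u'x_i$ satisfy, after renumbering, $y_1=\dots=y_h<y_{h+1}\le\dots\le y_n$, there exists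 $\alpha>0$, depending only on $k$ and on $y_1,\dots,y_n$, such that $u'T(X)\ge y_h+\alpha$. *)

theory Defs
  imports "HOL-Analysis.Analysis" "HOL-Library.Multiset"
begin

text \<open>Data sets are finite multisets of points of R^k (repetitions allowed);
  the dimension k is CARD('k).\<close>

definition general_position :: "(real^'k) multiset \<Rightarrow> bool" where
  "general_position X \<longleftrightarrow>
     (\<forall>u c. u \<noteq> 0 \<longrightarrow> size (filter_mset (\<lambda>x. u \<bullet> x = c) X) \<le> CARD('k))"

definition affine_equivariant :: "nat \<Rightarrow> ((real^'k) multiset \<Rightarrow> real^'k) \<Rightarrow> bool" where
  "affine_equivariant n T \<longleftrightarrow>
     (\<forall>X (A::real^'k^'k) b. size X = n \<longrightarrow> invertible A \<longrightarrow>
        T (image_mset (\<lambda>x. A *v x + b) X) = A *v T X + b)"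

text \<open>Condition (C_h): alpha depends only on (k and) the projected values y_1..y_n,
  encoded as a function of the multiset of these values.\<close>
definition condition_C :: "nat \<Rightarrow> nat \<Rightarrow> ((real^'k) multiset \<Rightarrow> real^'k) \<Rightarrow> bool" where
  "condition_C n h T \<longleftrightarrow>
     (\<exists>\<alpha> :: real multiset \<Rightarrow> real. (\<forall>Y. \<alpha> Y > 0) \<and>
        (\<forall>X u c. size X = n \<longrightarrow> general_position X \<longrightarrow>
           (\<forall>x\<in>#X. c \<le> u \<bullet> x) \<longrightarrow> size (filter_mset (\<lambda>x. u \<bullet> x = c) X) = h \<longrightarrow>
           u \<bullet> T X \<ge> c + \<alpha> (image_mset (\<lambda>x. u \<bullet> x) X)))"

definition replacements :: "'a multiset \<Rightarrow> nat \<Rightarrow> 'a multiset set" where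
  "replacements X m = {X - Y + Z | Y Z. Y \<subseteq># X \<and> size Y = m \<and> size Z = m}"

definition breaks_down :: "((real^'k) multiset \<Rightarrow> real^'k) \<Rightarrow> (real^'k) multiset \<Rightarrow> nat \<Rightarrow> bool" where
  "breaks_down T X m \<longleftrightarrow> (\<forall>B::real. \<exists>X'\<in>replacements X m. norm (T X' - T X) > B)"

definition fsbv :: "((real^'k) multiset \<Rightarrow> real^'k) \<Rightarrow> (real^'k) multiset \<Rightarrow> real" where
  "fsbv T X = Min {real m / real (size X) | m. 1 \<le> m \<and> m \<le> size X \<and> breaks_down T X m}"

end

theory Submission
  imports Defs
begin

text \<open>Choose a hyperplane \<open>u \<bullet> p = c\<close> with all data on the side \<open>u \<bullet> p \<ge> c\<close> and exactly \<open>h\<close>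
  data points on it; general position lets one rotate such a hyperplane about its face to
  gain points and tilt it to lose them. Take \<open>w \<noteq> 0\<close> parallel to it and split the \<open>n - h\<close>
  points above it into a set \<open>A\<close> of \<open>m = \<lfloor>(n - h + 1) / 2\<rfloor>\<close> points and the rest.
  Moving the rest by \<open>p \<mapsto> p - l (u \<bullet> p - c) w\<close> gives an \<open>m\<close>-replacement \<open>Y\<^sub>l\<close>; the
  shear \<open>g\<^sub>l p = p + l (u \<bullet> p - c) w\<close> maps \<open>Y\<^sub>l\<close> to a data set that differs from \<open>X\<close>
  only on \<open>A\<close>, another \<open>m\<close>-replacement. By affine equivariance the two estimates differ by
  \<open>l (u \<bullet> T Y\<^sub>l - c) w\<close>, and by \<open>(C\<^sub>h)\<close> the factor \<open>u \<bullet> T Y\<^sub>l - c\<close> is at least a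
  fixed \<open>\<alpha> > 0\<close>, because the projections of \<open>Y\<^sub>l\<close> onto \<open>u\<close> are those of \<open>X\<close>, for all
  but the finitely many \<open>l\<close> for which \<open>Y\<^sub>l\<close> is not in general position. Letting
  \<open>l \<rightarrow> \<infinity>\<close>, one of the two estimates breaks down.\<close>

section \<open>Supporting hyperplanes of points in general position\<close>

text \<open>Data are indexed by a set \<open>I\<close>, so that repeated points stay distinct.\<close>

definition general_position_on :: "'i set \<Rightarrow> ('i \<Rightarrow> 'a::euclidean_space) \<Rightarrow> bool" where
  "general_position_on I x \<longleftrightarrow> (\<forall>u c. u \<noteq> 0 \<longrightarrow> card {i\<in>I. u \<bullet> x i = c} \<le> DIM('a))"

lemma general_position_onD:
  fixes x :: "'i \<Rightarrow> 'a::euclidean_space"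
  assumes "general_position_on I x" "finite I" "u \<noteq> 0" "S \<subseteq> I" "\<forall>i\<in>S. u \<bullet> x i = c"
  shows "card S \<le> DIM('a)"
proof -
  have "card S \<le> card {i\<in>I. u \<bullet> x i = c}"
    using assms(2,4,5) by (intro card_mono) auto
  then show ?thesis
    using assms(1,3) unfolding general_position_on_def by (meson order_trans)
qed

lemma exists_hyperplane_through:
  fixes p :: "'i \<Rightarrow> 'a::euclidean_space"
  assumes "finite E" "finite S" "S \<noteq> {}" "card E + card S \<le> DIM('a)"
  obtains v d where "v \<noteq> 0" "\<forall>e\<in>E. v \<bullet> e = 0" "\<forall>i\<in>S. v \<bullet> p i = d"
proof -
  obtain i0 where i0: "i0 \<in> S"
    using assms(3) by blast
  define F where "F = E \<union> (\<lambda>i. p i - p i0) ` (S - {i0})"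
  have "card F \<le> card E + card (S - {i0})"
    unfolding F_def
    by (rule order_trans[OF card_Un_le add_left_mono[OF card_image_le]]) (use assms(2) in simp)
  also have "\<dots> < DIM('a)"
    using assms(2-4) i0 card_gt_0_iff[of S] by (simp add: card_Diff_singleton)
  finally have "dim F < DIM('a)"
    using dim_le_card[OF span_superset] assms(1,2) unfolding F_def
    by (meson finite_Diff finite_UnI finite_imageI le_less_trans)
  then obtain v where "v \<noteq> 0" and v: "\<And>y. y \<in> F \<Longrightarrow> v \<bullet> y = 0"
    using orthogonal_to_subspace_exists span_base unfolding orthogonal_def by metis
  moreover have "\<forall>i\<in>S. v \<bullet> p i = v \<bullet> p i0"
    using v[of "p _ - p i0"] unfolding F_def by (force simp: inner_diff_right)
  ultimately show ?thesis
    using that v unfolding F_def by blast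
qed

lemma general_position_on_separate_point:
  fixes x :: "'i \<Rightarrow> 'a::euclidean_space"
  assumes gp: "general_position_on I x" and "finite I" "DIM('a) < card I"
    and "S \<subseteq> I" "card S \<le> DIM('a)" "z \<in> S"
  obtains v d where "\<forall>i\<in>S - {z}. v \<bullet> x i = d" "d < v \<bullet> x z"
proof -
  have "\<exists>v d. (\<forall>i\<in>S - {z}. v \<bullet> x i = d) \<and> v \<bullet> x z \<noteq> d"
  proof (rule ccontr)
    assume no_separation: "\<not> ?thesis"
    have "finite S"
      using assms(2,4) finite_subset by blast
    then have "DIM('a) + 1 - card S \<le> card (I - S)"
      using assms(3,4) by (simp add: card_Diff_subset)
    then obtain W where W: "W \<subseteq> I - S" "card W = DIM('a) + 1 - card S" "finite W"
      by (rule obtain_subset_with_card_n)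
    note finite = \<open>finite S\<close> \<open>finite W\<close>
    have card_S: "card ((S - {z}) \<union> W) = DIM('a)"
      using W assms(5,6) finite card_gt_0_iff[of S]
      by (subst card_Un_disjoint) (auto simp: card_Diff_singleton)
    have nonempty: "(S - {z}) \<union> W \<noteq> {}"
      using card_S DIM_positive[where 'a='a] by (metis card.empty less_not_refl)
    have "\<exists>v d. v \<noteq> 0 \<and> (\<forall>i\<in>(S - {z}) \<union> W. v \<bullet> x i = d)"
      by (rule exists_hyperplane_through[of "{}" "(S - {z}) \<union> W" x]) (use finite card_S nonempty in auto)
    then obtain v d where "v \<noteq> 0" and v: "\<forall>i\<in>(S - {z}) \<union> W. v \<bullet> x i = d"
      by blast
    then have "v \<bullet> x z = d"
      using no_separation by blast
    then have "\<forall>i\<in>S \<union> W. v \<bullet> x i = d"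
      using v by blast
    moreover have "S \<union> W \<subseteq> I"
      using assms(4) W(1) by blast
    ultimately have "card (S \<union> W) \<le> DIM('a)"
      using general_position_onD[OF gp assms(2) \<open>v \<noteq> 0\<close>] by blast
    moreover have "card (S \<union> W) = DIM('a) + 1"
      using W assms(5) finite by (subst card_Un_disjoint) auto
    ultimately show False
      by simp
  qed
  then obtain v d where "\<forall>i\<in>S - {z}. v \<bullet> x i = d" "v \<bullet> x z \<noteq> d"
    by blast
  then show ?thesis
    using that[of v d] that[of "- v" "- d"] by (cases "d < v \<bullet> x z") auto
qed

lemma general_position_on_rotation_axis:
  fixes x :: "'i \<Rightarrow> 'a::euclidean_space"
  assumes gp: "general_position_on I x" and "finite I" "DIM('a) < card I"
    and "S \<subseteq> I" "S \<noteq> {}" "card S < DIM('a)"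
  obtains v d j where "v \<bullet> u = 0" "\<forall>i\<in>S. v \<bullet> x i = d" "j \<in> I" "d < v \<bullet> x j"
proof -
  have "finite S"
    using assms(2,4) finite_subset by blast
  have "\<exists>v d. v \<noteq> 0 \<and> v \<bullet> u = 0 \<and> (\<forall>i\<in>S. v \<bullet> x i = d)"
    by (rule exists_hyperplane_through[of "{u}" S x]) (use \<open>finite S\<close> assms(5,6) in auto)
  then obtain v d where "v \<noteq> 0" "v \<bullet> u = 0" and v: "\<forall>i\<in>S. v \<bullet> x i = d"
    by blast
  moreover have "\<not> (\<forall>i\<in>I. v \<bullet> x i = d)"
    using general_position_onD[OF gp assms(2) \<open>v \<noteq> 0\<close> subset_refl] assms(3) by (meson leD)
  then obtain j where "j \<in> I" "v \<bullet> x j \<noteq> d"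
    by blast
  ultimately show ?thesis
    using that[of v d j] that[of "- v" "- d" j] by (cases "d < v \<bullet> x j") auto
qed

lemma exists_small_perturbation:
  fixes f g :: "'i \<Rightarrow> real"
  assumes "finite I"
  obtains e where "0 < e" "\<forall>i\<in>I. 0 < f i \<longrightarrow> 0 < f i + e * g i"
proof -
  have "\<forall>i\<in>{i\<in>I. 0 < f i}. \<forall>\<^sub>F e in at_right 0. 0 < f i + e * g i"
  proof
    fix i assume "i \<in> {i\<in>I. 0 < f i}"
    moreover have "((\<lambda>e. f i + e * g i) \<longlongrightarrow> f i) (at_right 0)"
      by (auto intro!: tendsto_eq_intros)
    ultimately show "\<forall>\<^sub>F e in at_right 0. 0 < f i + e * g i"
      by (auto dest: order_tendstoD(1))
  qed
  then have "\<forall>\<^sub>F e in at_right 0. 0 < e \<and> (\<forall>i\<in>{i\<in>I. 0 < f i}. 0 < f i + e * g i)"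
    using assms by (intro eventually_conj eventually_at_right_less eventually_ball_finite) auto
  then show ?thesis
    using that eventually_happens'[OF trivial_limit_at_right_real] by blast
qed

lemma exists_tight_scaling:
  fixes f g :: "'i \<Rightarrow> real"
  assumes "finite I" "\<forall>i\<in>I. 0 \<le> f i" "j \<in> I" "0 < g j"
  obtains t j0 where "j0 \<in> I" "0 < g j0" "f j0 = t * g j0" "\<forall>i\<in>I. t * g i \<le> f i"
proof -
  define J where "J = {i\<in>I. 0 < g i}"
  have J: "finite J" "j \<in> J"
    using assms(1,3,4) unfolding J_def by auto
  define t where "t = Min ((\<lambda>i. f i / g i) ` J)"
  obtain j0 where j0: "j0 \<in> J" "t = f j0 / g j0"
    using Min_in[of "(\<lambda>i. f i / g i) ` J"] J unfolding t_def by blast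
  have t_le: "t \<le> f i / g i" if "i \<in> J" for i
    using J that unfolding t_def by simp
  have "0 \<le> t"
    using j0 assms(2) unfolding J_def by simp
  have "t * g i \<le> f i" if "i \<in> I" for i
  proof (cases "0 < g i")
    case True
    then show ?thesis
      using t_le[of i] that unfolding J_def by (simp add: le_divide_eq)
  next
    case False
    then show ?thesis
      using \<open>0 \<le> t\<close> assms(2) that by (meson mult_nonneg_nonpos not_less order_trans)
  qed
  then show ?thesis
    using that[of j0 t] j0 unfolding J_def by auto
qed

lemma bounding_hyperplane_raise:
  fixes x :: "'i \<Rightarrow> 'a::euclidean_space"
  assumes gp: "general_position_on I x" and "finite I" "DIM('a) < card I"
    and "u \<noteq> 0" "\<forall>i\<in>I. c \<le> u \<bullet> x i"
    and "{i\<in>I. u \<bullet> x i = c} \<noteq> {}" "card {i\<in>I. u \<bullet> x i = c} < DIM('a)"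
  obtains u' c' where "u' \<noteq> 0" "\<forall>i\<in>I. c' \<le> u' \<bullet> x i"
    "card {i\<in>I. u \<bullet> x i = c} < card {i\<in>I. u' \<bullet> x i = c'}"
proof -
  define Z where "Z = {i\<in>I. u \<bullet> x i = c}"
  obtain v d j where v: "v \<bullet> u = 0" "\<forall>i\<in>Z. v \<bullet> x i = d" "j \<in> I" "d < v \<bullet> x j"
    by (rule general_position_on_rotation_axis[OF gp assms(2,3), of Z u])
      (use assms(6,7) in \<open>auto simp: Z_def\<close>)
  obtain t j0 where j0: "j0 \<in> I" "0 < v \<bullet> x j0 - d" "u \<bullet> x j0 - c = t * (v \<bullet> x j0 - d)"
    and below: "\<forall>i\<in>I. t * (v \<bullet> x i - d) \<le> u \<bullet> x i - c"
    by (rule exists_tight_scaling[where f = "\<lambda>i. u \<bullet> x i - c" and g = "\<lambda>i. v \<bullet> x i - d" and j = j])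
      (use assms(2,5) v(3,4) in auto)
  \<comment> \<open>rotate the hyperplane about its face until it meets the point \<open>j0\<close>\<close>
  define u' where "u' = u - t *\<^sub>R v"
  define c' where "c' = c - t * d"
  have tilt: "u' \<bullet> x i - c' = (u \<bullet> x i - c) - t * (v \<bullet> x i - d)" for i
    unfolding u'_def c'_def by (simp add: inner_diff_left algebra_simps)
  have "u \<bullet> u' = u \<bullet> u"
    unfolding u'_def using v(1) by (simp add: inner_diff_right inner_commute)
  then have "u' \<noteq> 0"
    using assms(4) by auto
  moreover have "\<forall>i\<in>I. c' \<le> u' \<bullet> x i"
  proof
    fix i assume "i \<in> I"
    then have "t * (v \<bullet> x i - d) \<le> u \<bullet> x i - c"
      using below by blast
    then show "c' \<le> u' \<bullet> x i"
      using tilt[of i] by linarith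
  qed
  moreover have "card Z < card {i\<in>I. u' \<bullet> x i = c'}"
  proof -
    have "j0 \<notin> Z"
      using j0(2) v(2) by auto
    then have "card Z < card (insert j0 Z)"
      using assms(2) unfolding Z_def by simp
    also have "\<dots> \<le> card {i\<in>I. u' \<bullet> x i = c'}"
    proof (intro card_mono)
      have "u' \<bullet> x i = c'" if "i \<in> Z" for i
        using tilt[of i] v(2) that unfolding Z_def by simp
      moreover have "u' \<bullet> x j0 = c'"
        using tilt[of j0] j0(3) by simp
      ultimately show "insert j0 Z \<subseteq> {i\<in>I. u' \<bullet> x i = c'}"
        using j0(1) unfolding Z_def by blast
    qed (use assms(2) in simp)
    finally show ?thesis .
  qed
  ultimately show ?thesis
    using that unfolding Z_def by blast
qed

lemma bounding_hyperplane_drop: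
  fixes x :: "'i \<Rightarrow> 'a::euclidean_space"
  assumes gp: "general_position_on I x" and "finite I" "DIM('a) < card I"
    and "u \<noteq> 0" "\<forall>i\<in>I. c \<le> u \<bullet> x i"
    and "2 \<le> card {i\<in>I. u \<bullet> x i = c}" "z \<in> I" "u \<bullet> x z = c"
  obtains u' c' where "u' \<noteq> 0" "\<forall>i\<in>I. c' \<le> u' \<bullet> x i"
    "{i\<in>I. u' \<bullet> x i = c'} = {i\<in>I. u \<bullet> x i = c} - {z}"
proof -
  define Z where "Z = {i\<in>I. u \<bullet> x i = c}"
  have "card Z \<le> DIM('a)"
    by (rule general_position_onD[OF gp assms(2,4), where c = c]) (auto simp: Z_def)
  obtain v d where v: "\<forall>i\<in>Z - {z}. v \<bullet> x i = d" "d < v \<bullet> x z"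
    by (rule general_position_on_separate_point[OF gp assms(2,3), of Z z])
      (use assms(7,8) \<open>card Z \<le> DIM('a)\<close> in \<open>auto simp: Z_def\<close>)
  obtain e where "0 < e" and e: "\<forall>i\<in>I. 0 < u \<bullet> x i - c \<longrightarrow> 0 < (u \<bullet> x i - c) + e * (v \<bullet> x i - d)"
    using exists_small_perturbation[OF assms(2), of "\<lambda>i. u \<bullet> x i - c" "\<lambda>i. v \<bullet> x i - d"] by blast
  \<comment> \<open>tilt slightly about the face points other than \<open>z\<close>, so that \<open>z\<close> lifts off\<close>
  define u' where "u' = u + e *\<^sub>R v"
  define c' where "c' = c + e * d"
  have tilt: "u' \<bullet> x i - c' = (u \<bullet> x i - c) + e * (v \<bullet> x i - d)" for i
    unfolding u'_def c'_def by (simp add: inner_add_left algebra_simps)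
  have above: "0 < u' \<bullet> x i - c'" if "i \<in> I" "i \<notin> Z - {z}" for i
  proof (cases "i = z")
    case True
    then show ?thesis
      using tilt[of z] v(2) assms(8) \<open>0 < e\<close> by simp
  next
    case False
    then have "u \<bullet> x i \<noteq> c"
      using that unfolding Z_def by blast
    then have "0 < u \<bullet> x i - c"
      using assms(5) that(1) by fastforce
    then show ?thesis
      using e that(1) tilt[of i] by simp
  qed
  have on_face: "u' \<bullet> x i = c'" if "i \<in> Z - {z}" for i
    using that tilt[of i] v(1) unfolding Z_def by simp
  have "{i\<in>I. u' \<bullet> x i = c'} = Z - {z}"
  proof (intro equalityI subsetI)
    fix i assume "i \<in> {i\<in>I. u' \<bullet> x i = c'}"
    then show "i \<in> Z - {z}"
      using above[of i] by auto
  next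
    fix i assume "i \<in> Z - {z}"
    then show "i \<in> {i\<in>I. u' \<bullet> x i = c'}"
      using on_face unfolding Z_def by auto
  qed
  moreover have "c' \<le> u' \<bullet> x i" if "i \<in> I" for i
    using above[OF that] on_face[of i] by (cases "i \<in> Z - {z}") auto
  moreover have "u' \<noteq> 0"
  proof
    assume "u' = 0"
    have "card (Z - {z}) \<noteq> 0"
      using assms(6) unfolding Z_def by (simp add: card_Diff_singleton_if)
    then have "Z - {z} \<noteq> {}"
      by (metis card.empty)
    then obtain i where "i \<in> Z - {z}"
      by blast
    then show False
      using on_face[of i] above[of z] assms(7) \<open>u' = 0\<close> by simp
  qed
  ultimately show ?thesis
    using that unfolding Z_def by blast
qed

lemma exists_bounding_hyperplane_card_ge:
  fixes x :: "'i \<Rightarrow> 'a::euclidean_space"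
  assumes gp: "general_position_on I x" and "finite I" "DIM('a) < card I"
    and "1 \<le> h" "h \<le> DIM('a)"
  shows "\<exists>u c. u \<noteq> 0 \<and> (\<forall>i\<in>I. c \<le> u \<bullet> x i) \<and> h \<le> card {i\<in>I. u \<bullet> x i = c}"
  using assms(4,5)
proof (induction h rule: nat_induct_at_least)
  case base
  obtain u :: 'a where "u \<noteq> 0"
    using nonzero_Basis SOME_Basis by blast
  define c where "c = Min ((\<lambda>i. u \<bullet> x i) ` I)"
  have "I \<noteq> {}"
    using assms(3) by auto
  then obtain i where "i \<in> I" "u \<bullet> x i = c"
    using Min_in[of "(\<lambda>i. u \<bullet> x i) ` I"] assms(2) unfolding c_def by fastforce
  then have "0 < card {i\<in>I. u \<bullet> x i = c}"
    using assms(2) by (auto simp: card_gt_0_iff)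
  moreover have "\<forall>i\<in>I. c \<le> u \<bullet> x i"
    using assms(2) unfolding c_def by simp
  ultimately show ?case
    using \<open>u \<noteq> 0\<close> by (metis One_nat_def Suc_leI)
next
  case (Suc h)
  then obtain u c where uc: "u \<noteq> 0" "\<forall>i\<in>I. c \<le> u \<bullet> x i" "h \<le> card {i\<in>I. u \<bullet> x i = c}"
    by auto
  show ?case
  proof (cases "Suc h \<le> card {i\<in>I. u \<bullet> x i = c}")
    case True
    then show ?thesis
      using uc by blast
  next
    case False
    then have "card {i\<in>I. u \<bullet> x i = c} = h"
      using uc(3) by simp
    then have "{i\<in>I. u \<bullet> x i = c} \<noteq> {}" "card {i\<in>I. u \<bullet> x i = c} < DIM('a)"
      using Suc.hyps Suc.prems by (fastforce simp: card_gt_0_iff)+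
    then obtain u' c' where "u' \<noteq> 0" "\<forall>i\<in>I. c' \<le> u' \<bullet> x i"
      "h < card {i\<in>I. u' \<bullet> x i = c'}"
      using bounding_hyperplane_raise[OF gp assms(2,3) uc(1,2)] \<open>card {i\<in>I. u \<bullet> x i = c} = h\<close>
      by metis
    then show ?thesis
      by (metis Suc_leI)
  qed
qed

lemma exists_bounding_hyperplane_card_eq:
  fixes x :: "'i \<Rightarrow> 'a::euclidean_space"
  assumes gp: "general_position_on I x" and "finite I" "DIM('a) < card I"
    and "1 \<le> h" "h \<le> DIM('a)"
  obtains u c where "u \<noteq> 0" "\<forall>i\<in>I. c \<le> u \<bullet> x i" "card {i\<in>I. u \<bullet> x i = c} = h"
proof -
  have shrink: "\<exists>u c. u \<noteq> 0 \<and> (\<forall>i\<in>I. c \<le> u \<bullet> x i) \<and> card {i\<in>I. u \<bullet> x i = c} = h"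
    if "u \<noteq> 0" "\<forall>i\<in>I. c \<le> u \<bullet> x i" "card {i\<in>I. u \<bullet> x i = c} = h + j" for j u c
    using that
  proof (induction j arbitrary: u c)
    case 0
    then show ?case
      by auto
  next
    case (Suc j)
    let ?Z = "{i\<in>I. u \<bullet> x i = c}"
    have "card ?Z \<noteq> 0"
      using Suc.prems(3) by simp
    then obtain z where z: "z \<in> I" "u \<bullet> x z = c"
      by (metis (mono_tags, lifting) card.empty empty_Collect_eq)
    have "2 \<le> card ?Z"
      using Suc.prems(3) assms(4) by simp
    then obtain u' c' where u'c': "u' \<noteq> 0" "\<forall>i\<in>I. c' \<le> u' \<bullet> x i"
      and "{i\<in>I. u' \<bullet> x i = c'} = ?Z - {z}"
      using bounding_hyperplane_drop[OF gp assms(2,3) Suc.prems(1,2) _ z] by blast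
    moreover have "card (?Z - {z}) = h + j"
      using Suc.prems(3) z by simp
    ultimately show ?case
      using Suc.IH[OF u'c'] by simp
  qed
  obtain u c where uc: "u \<noteq> 0" "\<forall>i\<in>I. c \<le> u \<bullet> x i" "h \<le> card {i\<in>I. u \<bullet> x i = c}"
    using exists_bounding_hyperplane_card_ge[OF assms] by blast
  then obtain j where "card {i\<in>I. u \<bullet> x i = c} = h + j"
    using le_Suc_ex by blast
  then show ?thesis
    using shrink[OF uc(1,2)] that by blast
qed


section \<open>Shifting along a line preserves general position generically\<close>

lemma shifted_hyperplane_parameter_unique:
  fixes x :: "'i \<Rightarrow> 'a::euclidean_space"
  assumes gp: "general_position_on I x" and "finite I" "S \<subseteq> I" "DIM('a) < card S"
    and "u1 \<noteq> 0" "\<forall>i\<in>S. u1 \<bullet> (x i + (l1 * t i) *\<^sub>R w) = c1"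
    and "u2 \<noteq> 0" "\<forall>i\<in>S. u2 \<bullet> (x i + (l2 * t i) *\<^sub>R w) = c2"
  shows "l1 = l2"
proof (rule ccontr)
  assume "l1 \<noteq> l2"
  have not_flat: False if "v \<noteq> 0" "\<forall>i\<in>S. v \<bullet> x i = d" for v d
    using general_position_onD[OF gp assms(2) that(1) assms(3) that(2)] assms(4) by simp
  define s1 where "s1 = u1 \<bullet> w"
  define s2 where "s2 = u2 \<bullet> w"
  have x1: "u1 \<bullet> x i = c1 - l1 * t i * s1" if "i \<in> S" for i
    using assms(6) that unfolding s1_def by (simp add: inner_add_right algebra_simps)
  have x2: "u2 \<bullet> x i = c2 - l2 * t i * s2" if "i \<in> S" for i
    using assms(8) that unfolding s2_def by (simp add: inner_add_right algebra_simps)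
  have "s1 \<noteq> 0"
  proof
    assume "s1 = 0"
    then show False
      using not_flat[OF assms(5), of c1] x1 by simp
  qed
  have "s2 \<noteq> 0"
  proof
    assume "s2 = 0"
    then show False
      using not_flat[OF assms(7), of c2] x2 by simp
  qed
  \<comment> \<open>eliminates the unknown shifts \<open>t i\<close> from the two hyperplane equations\<close>
  define v where "v = (l2 * s2) *\<^sub>R u1 - (l1 * s1) *\<^sub>R u2"
  have "v \<bullet> w = s1 * s2 * (l2 - l1)"
    unfolding v_def s1_def s2_def by (simp add: inner_diff_left algebra_simps)
  then have "v \<noteq> 0"
    using \<open>s1 \<noteq> 0\<close> \<open>s2 \<noteq> 0\<close> \<open>l1 \<noteq> l2\<close> by auto
  moreover have "\<forall>i\<in>S. v \<bullet> x i = l2 * s2 * c1 - l1 * s1 * c2"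
  proof
    fix i assume "i \<in> S"
    have "v \<bullet> x i = l2 * s2 * (c1 - l1 * t i * s1) - l1 * s1 * (c2 - l2 * t i * s2)"
      unfolding v_def by (simp add: inner_diff_left x1[OF \<open>i \<in> S\<close>] x2[OF \<open>i \<in> S\<close>])
    then show "v \<bullet> x i = l2 * s2 * c1 - l1 * s1 * c2"
      by (simp add: algebra_simps)
  qed
  ultimately show False
    by (rule not_flat)
qed

lemma finite_not_general_position_shift:
  fixes x :: "'i \<Rightarrow> 'a::euclidean_space"
  assumes gp: "general_position_on I x" and "finite I"
  shows "finite {l. \<not> general_position_on I (\<lambda>i. x i + (l * t i) *\<^sub>R w)}"
proof -
  define flat where "flat l S \<longleftrightarrow> DIM('a) < card S \<and>
    (\<exists>u c. u \<noteq> 0 \<and> (\<forall>i\<in>S. u \<bullet> (x i + (l * t i) *\<^sub>R w) = c))" for l S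
  have "{l. \<not> general_position_on I (\<lambda>i. x i + (l * t i) *\<^sub>R w)} \<subseteq> (\<Union>S\<in>Pow I. {l. flat l S})"
  proof
    fix l assume "l \<in> {l. \<not> general_position_on I (\<lambda>i. x i + (l * t i) *\<^sub>R w)}"
    then obtain u c where "u \<noteq> 0" "DIM('a) < card {i\<in>I. u \<bullet> (x i + (l * t i) *\<^sub>R w) = c}"
      unfolding general_position_on_def by (auto simp: not_le)
    then show "l \<in> (\<Union>S\<in>Pow I. {l. flat l S})"
      unfolding flat_def by (intro UN_I[of "{i\<in>I. u \<bullet> (x i + (l * t i) *\<^sub>R w) = c}"]) auto
  qed
  moreover have "finite {l. flat l S}" if "S \<subseteq> I" for S
  proof (cases "\<exists>l. flat l S")
    case True
    then obtain l0 where "flat l0 S"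
      by blast
    have "l = l0" if "flat l S" for l
      using \<open>flat l0 S\<close> that \<open>S \<subseteq> I\<close> shifted_hyperplane_parameter_unique[OF gp assms(2)]
      unfolding flat_def by metis
    then have "{l. flat l S} \<subseteq> {l0}"
      by blast
    then show ?thesis
      by (rule finite_subset) simp
  qed simp
  then have "finite (\<Union>S\<in>Pow I. {l. flat l S})"
    using assms(2) by (intro finite_UN_I) auto
  ultimately show ?thesis
    by (rule finite_subset)
qed

section \<open>Breakdown by shearing\<close>

lemma general_position_image_mset_set:
  fixes x :: "'i \<Rightarrow> real^'k"
  assumes "finite I"
  shows "general_position (image_mset x (mset_set I)) \<longleftrightarrow> general_position_on I x"
  using assms unfolding general_position_def general_position_on_def
  by (simp add: filter_mset_image_mset)

lemma ex_image_mset_lessThan: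
  assumes "size X = n"
  obtains x where "X = image_mset x (mset_set {..<n})"
proof -
  obtain xs where "mset xs = X"
    using ex_mset by blast
  moreover have "length xs = n"
    using \<open>mset xs = X\<close> assms by auto
  then have "xs = map ((!) xs) [0..<n]"
    using map_nth by metis
  ultimately have "X = image_mset ((!) xs) (mset_set {..<n})"
    by (metis mset_map mset_upt atLeast0LessThan)
  then show ?thesis
    using that by blast
qed

lemma image_mset_in_replacements:
  assumes "finite I" "S \<subseteq> I" "card S \<le> m" "m \<le> card I"
    and "\<And>i. i \<in> I - S \<Longrightarrow> g i = f i"
  shows "image_mset g (mset_set I) \<in> replacements (image_mset f (mset_set I)) m"
proof -
  have "finite S"
    using assms(1,2) finite_subset by blast
  then have "m - card S \<le> card (I - S)"
    using assms(2,4) by (simp add: card_Diff_subset)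
  then obtain R where R: "R \<subseteq> I - S" "card R = m - card S"
    by (rule obtain_subset_with_card_n)
  define S' where "S' = S \<union> R"
  have finite: "finite S'" "finite (I - S')"
    unfolding S'_def using assms(1,2) R(1) finite_subset by blast+
  have "card S' = m"
    using R \<open>finite S\<close> finite(1) assms(3) unfolding S'_def
    by (subst card_Un_disjoint) auto
  have "I = (I - S') \<union> S'"
    using R(1) assms(2) unfolding S'_def by blast
  then have split: "mset_set I = mset_set (I - S') + mset_set S'"
    using mset_set_Union[OF finite(2,1)] by (metis Diff_disjoint Int_commute)
  have same: "image_mset g (mset_set (I - S')) = image_mset f (mset_set (I - S'))"
    using assms(5) finite(2) unfolding S'_def by (intro image_mset_cong) auto
  define Y where "Y = image_mset f (mset_set S')"
  define Z where "Z = image_mset g (mset_set S')"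
  have X: "image_mset f (mset_set I) = image_mset f (mset_set (I - S')) + Y"
    unfolding Y_def split by simp
  then have "Y \<subseteq># image_mset f (mset_set I)"
    by simp
  moreover have "image_mset g (mset_set I) = image_mset f (mset_set I) - Y + Z"
    unfolding X unfolding Z_def split same[symmetric] by simp
  moreover have "size Y = m" "size Z = m"
    unfolding Y_def Z_def using \<open>card S' = m\<close> by simp_all
  ultimately show ?thesis
    unfolding replacements_def by blast
qed

definition shear_matrix :: "real^'n \<Rightarrow> real^'n \<Rightarrow> real^'n^'n" where
  "shear_matrix u w = mat 1 + (\<chi> i j. w $ i * u $ j)"

lemma shear_matrix_apply: "shear_matrix u w *v p = p + (u \<bullet> p) *\<^sub>R w"
proof -
  have "(\<chi> i j. w $ i * u $ j) *v p = (u \<bullet> p) *\<^sub>R w"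
    by (simp add: vec_eq_iff matrix_vector_mult_def inner_vec_def sum_distrib_left algebra_simps)
  then show ?thesis
    unfolding shear_matrix_def by (simp add: matrix_vector_mult_add_rdistrib)
qed

lemma invertible_shear_matrix:
  assumes "u \<bullet> w = 0"
  shows "invertible (shear_matrix u w)"
proof -
  have "shear_matrix u (- w) ** shear_matrix u w = mat 1"
    by (simp add: matrix_eq matrix_vector_mul_assoc[symmetric] shear_matrix_apply
        inner_add_right assms)
  then show ?thesis
    unfolding invertible_left_inverse by blast
qed

lemma affine_equivariant_shear:
  assumes "affine_equivariant n T" "size Y = n" "u \<bullet> w = 0"
  shows "T (image_mset (\<lambda>p. p + (u \<bullet> p - c) *\<^sub>R w) Y) = T Y + (u \<bullet> T Y - c) *\<^sub>R w"
proof -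
  have shear: "(\<lambda>p. p + (u \<bullet> p - c) *\<^sub>R w) = (\<lambda>p. shear_matrix u w *v p + (- c) *\<^sub>R w)"
    by (simp add: shear_matrix_apply algebra_simps)
  have "T (image_mset (\<lambda>p. shear_matrix u w *v p + (- c) *\<^sub>R w) Y) = shear_matrix u w *v T Y + (- c) *\<^sub>R w"
    using assms(1,2) invertible_shear_matrix[OF assms(3)] unfolding affine_equivariant_def by blast
  then show ?thesis
    unfolding shear by (simp add: shear_matrix_apply algebra_simps)
qed

lemma condition_C_uniform_margin:
  assumes "condition_C n h T" "size X = n" "\<forall>p\<in>#X. c \<le> u \<bullet> p"
    and "size (filter_mset (\<lambda>p. u \<bullet> p = c) X) = h"
  obtains a where "0 < a"
    "\<And>Y. size Y = n \<Longrightarrow> general_position Y \<Longrightarrow>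
      image_mset (\<lambda>p. u \<bullet> p) Y = image_mset (\<lambda>p. u \<bullet> p) X \<Longrightarrow> c + a \<le> u \<bullet> T Y"
proof -
  obtain \<alpha> where "\<forall>Y. 0 < \<alpha> Y" and margin: "\<forall>Y u c. size Y = n \<longrightarrow> general_position Y \<longrightarrow>
      (\<forall>p\<in>#Y. c \<le> u \<bullet> p) \<longrightarrow> size (filter_mset (\<lambda>p. u \<bullet> p = c) Y) = h \<longrightarrow>
      c + \<alpha> (image_mset (\<lambda>p. u \<bullet> p) Y) \<le> u \<bullet> T Y"
    using assms(1) unfolding condition_C_def by blast
  have "c + \<alpha> (image_mset (\<lambda>p. u \<bullet> p) X) \<le> u \<bullet> T Y"
    if "size Y = n" "general_position Y" and proj: "image_mset (\<lambda>p. u \<bullet> p) Y = image_mset (\<lambda>p. u \<bullet> p) X" for Y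
  proof -
    have "\<forall>p\<in>#Y. c \<le> u \<bullet> p"
    proof
      fix p assume "p \<in># Y"
      then have "u \<bullet> p \<in># image_mset (\<lambda>p. u \<bullet> p) X"
        unfolding proj[symmetric] by simp
      then show "c \<le> u \<bullet> p"
        using assms(3) by auto
    qed
    moreover have "size (filter_mset (\<lambda>p. u \<bullet> p = c) Y) = size (filter_mset (\<lambda>p. u \<bullet> p = c) X)"
      using arg_cong[OF proj, of "\<lambda>M. size (filter_mset (\<lambda>r. r = c) M)"]
      by (simp flip: image_mset_filter_mset_swap)
    ultimately show ?thesis
      using margin that(1,2) assms(4) proj by metis
  qed
  then show ?thesis
    using that \<open>\<forall>Y. 0 < \<alpha> Y\<close> by blast
qed

lemma breaks_down_if_diverging_pairs:
  fixes T :: "(real^'k) multiset \<Rightarrow> real^'k"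
  assumes "finite L" "0 < a"
    and "\<And>l. l \<notin> L \<Longrightarrow> 0 < l \<Longrightarrow> Y l \<in> replacements X m \<and> Y' l \<in> replacements X m \<and>
      l * a \<le> norm (T (Y' l) - T (Y l))"
  shows "breaks_down T X m"
  unfolding breaks_down_def
proof
  fix B :: real
  have "\<forall>\<^sub>F l in at_top. Max (insert 0 L) < l \<and> 2 * \<bar>B\<bar> / a < l"
    by (intro eventually_conj eventually_gt_at_top)
  then obtain l where l: "Max (insert 0 L) < l" "2 * \<bar>B\<bar> / a < l"
    using eventually_happens'[OF trivial_limit_at_top_linorder] by blast
  have "finite (insert 0 L)"
    using assms(1) by simp
  then have "l \<notin> L" "0 < l"
    using l(1) Max_ge[of "insert 0 L"] by (meson insertCI not_le order_trans)+
  then have in_repl: "Y l \<in> replacements X m" "Y' l \<in> replacements X m"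
    and far: "l * a \<le> norm (T (Y' l) - T (Y l))"
    using assms(3) by blast+
  have "2 * \<bar>B\<bar> < l * a"
    using l(2) assms(2) by (simp add: divide_less_eq)
  also have "\<dots> \<le> norm (T (Y' l) - T X) + norm (T (Y l) - T X)"
    using far norm_triangle_ineq4[of "T (Y' l) - T X" "T (Y l) - T X"] by simp
  finally have "B < norm (T (Y' l) - T X) \<or> B < norm (T (Y l) - T X)"
    by linarith
  then show "\<exists>X'\<in>replacements X m. B < norm (T X' - T X)"
    using in_repl by blast
qed

lemma fsbv_le_if_breaks_down:
  assumes "breaks_down T X m" "1 \<le> m" "m \<le> size X"
  shows "fsbv T X \<le> real m / real (size X)"
proof -
  let ?F = "{real m' / real (size X) | m'. 1 \<le> m' \<and> m' \<le> size X \<and> breaks_down T X m'}"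
  have "?F \<subseteq> (\<lambda>m'. real m' / real (size X)) ` {..size X}"
    by auto
  then have "finite ?F"
    using finite_subset by blast
  then show ?thesis
    unfolding fsbv_def using assms by (intro Min_le) auto
qed

lemma estimate_shear_displacement_ge:
  assumes "affine_equivariant n T" "size Y = n" "u \<bullet> w = 0" "c + a \<le> u \<bullet> T Y" "0 \<le> a" "0 \<le> l"
  shows "l * (a * norm w) \<le> norm (T (image_mset (\<lambda>p. p + (u \<bullet> p - c) *\<^sub>R (l *\<^sub>R w)) Y) - T Y)"
proof -
  have "u \<bullet> (l *\<^sub>R w) = 0"
    using assms(3) by simp
  then have "T (image_mset (\<lambda>p. p + (u \<bullet> p - c) *\<^sub>R (l *\<^sub>R w)) Y) = T Y + (u \<bullet> T Y - c) *\<^sub>R (l *\<^sub>R w)"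
    by (rule affine_equivariant_shear[OF assms(1,2)])
  then have "T (image_mset (\<lambda>p. p + (u \<bullet> p - c) *\<^sub>R (l *\<^sub>R w)) Y) - T Y = (u \<bullet> T Y - c) *\<^sub>R (l *\<^sub>R w)"
    by (simp only: add_diff_cancel_left')
  moreover have "a * (l * norm w) \<le> (u \<bullet> T Y - c) * (l * norm w)"
    using assms(4,6) by (intro mult_right_mono) auto
  moreover have "0 \<le> u \<bullet> T Y - c"
    using assms(4,5) by simp
  ultimately show ?thesis
    using assms(6) by (simp add: mult_ac)
qed

lemma shear_pair_in_replacements:
  fixes x :: "'i \<Rightarrow> 'a::real_inner" and l :: real
  assumes "finite I" "u \<bullet> w = 0" "A \<subseteq> I" "card A = m" "card {i\<in>I - A. u \<bullet> x i \<noteq> c} \<le> m"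
  defines "y \<equiv> \<lambda>i. x i + (l * (if i \<in> A then 0 else c - u \<bullet> x i)) *\<^sub>R w"
  shows "image_mset y (mset_set I) \<in> replacements (image_mset x (mset_set I)) m"
    and "image_mset (\<lambda>p. p + (u \<bullet> p - c) *\<^sub>R (l *\<^sub>R w)) (image_mset y (mset_set I))
      \<in> replacements (image_mset x (mset_set I)) m"
proof -
  have "m \<le> card I"
    using assms(1,3,4) card_mono by blast
  then show "image_mset y (mset_set I) \<in> replacements (image_mset x (mset_set I)) m"
    using assms(1,5) unfolding y_def
    by (intro image_mset_in_replacements[of I "{i\<in>I - A. u \<bullet> x i \<noteq> c}"]) auto
  have "y i + (u \<bullet> y i - c) *\<^sub>R (l *\<^sub>R w) = x i" if "i \<notin> A" for i
    using that assms(2) unfolding y_def by (simp add: inner_add_right algebra_simps)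
  then have sheared: "image_mset (\<lambda>p. p + (u \<bullet> p - c) *\<^sub>R (l *\<^sub>R w)) (image_mset y (mset_set I))
      = image_mset (\<lambda>i. if i \<in> A then y i + (u \<bullet> y i - c) *\<^sub>R (l *\<^sub>R w) else x i) (mset_set I)"
    by (auto simp: image_mset.compositionality comp_def intro!: image_mset_cong)
  then show "image_mset (\<lambda>p. p + (u \<bullet> p - c) *\<^sub>R (l *\<^sub>R w)) (image_mset y (mset_set I))
      \<in> replacements (image_mset x (mset_set I)) m"
    unfolding sheared using assms(1,3,4) \<open>m \<le> card I\<close>
    by (intro image_mset_in_replacements[of I A]) auto
qed

lemma breaks_down_by_shearing:
  fixes T :: "(real^'k) multiset \<Rightarrow> real^'k" and x :: "'i \<Rightarrow> real^'k"
  assumes "2 \<le> CARD('k)" "finite I"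
    and equiv: "affine_equivariant (card I) T" and C: "condition_C (card I) h T"
    and gp: "general_position_on I x"
    and below: "\<forall>i\<in>I. c \<le> u \<bullet> x i" and face: "card {i\<in>I. u \<bullet> x i = c} = h"
    and "m \<le> card I - h" "card I - h \<le> 2 * m"
  shows "breaks_down T (image_mset x (mset_set I)) m"
proof -
  define X where "X = image_mset x (mset_set I)"
  define Z where "Z = {i\<in>I. u \<bullet> x i = c}"
  obtain w :: "real^'k" where "w \<noteq> 0" "u \<bullet> w = 0"
    using orthogonal_to_vector_exists[of u] assms(1) unfolding orthogonal_def by auto
  have "card (I - Z) = card I - h"
    using assms(2) face unfolding Z_def by (subst card_Diff_subset) auto
  then obtain A where A: "A \<subseteq> I - Z" "card A = m" "finite A"
    using assms(8) by (metis obtain_subset_with_card_n)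
  have "{i\<in>I - A. u \<bullet> x i \<noteq> c} = I - Z - A"
    unfolding Z_def by blast
  then have "card {i\<in>I - A. u \<bullet> x i \<noteq> c} \<le> m"
    using A \<open>card (I - Z) = card I - h\<close> assms(9) by (simp add: card_Diff_subset)
  \<comment> \<open>\<open>Y l\<close> moves the points off the face and outside \<open>A\<close> along \<open>w\<close>; its shear \<open>Y' l\<close>
    moves them back and moves the points of \<open>A\<close> instead.\<close>
  define t where "t i = (if i \<in> A then 0 else c - u \<bullet> x i)" for i
  define y where "y l i = x i + (l * t i) *\<^sub>R w" for l i
  define Y where "Y l = image_mset (y l) (mset_set I)" for l
  define Y' where "Y' l = image_mset (\<lambda>p. p + (u \<bullet> p - c) *\<^sub>R (l *\<^sub>R w)) (Y l)" for l
  have "A \<subseteq> I"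
    using A(1) by blast
  have repl: "Y l \<in> replacements X m" "Y' l \<in> replacements X m" for l
    using shear_pair_in_replacements[OF assms(2) \<open>u \<bullet> w = 0\<close> \<open>A \<subseteq> I\<close> A(2)
        \<open>card {i\<in>I - A. u \<bullet> x i \<noteq> c} \<le> m\<close>, of l]
    unfolding Y_def Y'_def X_def y_def t_def by simp_all
  have "size X = card I" "\<forall>p\<in>#X. c \<le> u \<bullet> p" "size (filter_mset (\<lambda>p. u \<bullet> p = c) X) = h"
    unfolding X_def using assms(2) below face by (auto simp: filter_mset_image_mset)
  then obtain a where "0 < a" and margin: "\<And>D. size D = card I \<Longrightarrow> general_position D \<Longrightarrow>
      image_mset (\<lambda>p. u \<bullet> p) D = image_mset (\<lambda>p. u \<bullet> p) X \<Longrightarrow> c + a \<le> u \<bullet> T D"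
    using condition_C_uniform_margin[OF C] by metis
  have "l * (a * norm w) \<le> norm (T (Y' l) - T (Y l))"
    if "general_position_on I (y l)" "0 < l" for l
  proof -
    have "image_mset (\<lambda>p. u \<bullet> p) (Y l) = image_mset (\<lambda>p. u \<bullet> p) X"
      using \<open>u \<bullet> w = 0\<close> unfolding Y_def X_def y_def
      by (simp add: image_mset.compositionality comp_def inner_add_right)
    moreover have "general_position (Y l)" "size (Y l) = card I"
      unfolding Y_def using general_position_image_mset_set[OF assms(2)] that(1) by auto
    ultimately have "c + a \<le> u \<bullet> T (Y l)"
      using margin by blast
    then show ?thesis
      unfolding Y'_def using estimate_shear_displacement_ge[OF equiv] \<open>u \<bullet> w = 0\<close> \<open>0 < a\<close> that(2)
      by (simp add: Y_def)
  qed
  moreover have "finite {l. \<not> general_position_on I (y l)}"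
    unfolding y_def by (rule finite_not_general_position_shift[OF gp assms(2)])
  ultimately show ?thesis
    unfolding X_def[symmetric] using repl \<open>0 < a\<close> \<open>w \<noteq> 0\<close>
    by (intro breaks_down_if_diverging_pairs[where a = "a * norm w" and Y = Y and Y' = Y']) auto
qed

theorem theorem1:
  fixes T :: "(real^'k) multiset \<Rightarrow> real^'k"
    and X :: "(real^'k) multiset"
    and n h :: nat
  assumes "CARD('k) \<ge> 2"
    and "n > CARD('k)"
    and "1 \<le> h" and "h \<le> CARD('k)"
    and "affine_equivariant n T"
    and "condition_C n h T"
    and "size X = n"
    and "general_position X"
  shows "fsbv T X \<le> real ((n - h + 1) div 2) / real n"
proof -
  obtain x where X: "X = image_mset x (mset_set {..<n})"
    using ex_image_mset_lessThan[OF assms(7)] by blast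
  have gp: "general_position_on {..<n} x"
    using assms(8) general_position_image_mset_set[of "{..<n}" x] unfolding X by simp
  obtain u c where "\<forall>i\<in>{..<n}. c \<le> u \<bullet> x i" "card {i\<in>{..<n}. u \<bullet> x i = c} = h"
    by (rule exists_bounding_hyperplane_card_eq[OF gp, of h]) (use assms(2-4) in auto)
  then have "breaks_down T X ((n - h + 1) div 2)"
    unfolding X using assms(1,3-6) gp
    by (intro breaks_down_by_shearing[where I = "{..<n}"]) auto
  moreover have "1 \<le> (n - h + 1) div 2" "(n - h + 1) div 2 \<le> n"
    using assms(2,4) by auto
  ultimately show ?thesis
    using fsbv_le_if_breaks_down assms(7) by fastforce
qed

end
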